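(* Let $\gamma_{ab}(q)$ be a metric and $E_0\neq0$ a fixed constant, and consider the geodesic equations $\ddot q^a+\Gamma^a_{bc}\dot q^b\dot q^c=0$ subject to $\gamma_{ab}\dot q^a\dot q^b=2E_0$. Then each of the following is a first integral of this constrained system: Integral 1. For $\ell\ge0$, $$I_{(\ell)1}=\Big(-\sum_{k=1}^{\ell}\frac{t^{2k}}{2k}L_{(2k-1)(a;b)}+C_{(0)ab}\Big)\dot q^a\dot q^b+\sum_{k=1}^{\ell}t^{2k-1}L_{(2k-1)a}\dot q^a+G(q),$$ where (if $\ell\ge1$) $L_{(2\ell-1)(a;b)}$ is a Killing tensor, $C_{(0)ab}$ is a second order CKT with associated vector $X_{(0)a}$, for $k=1,\dots,\ell-1$ each $L_{(2k-1)(a;b)}$ is a second order CKT with associated vector $Y_{(2k-1)a}=\frac{k(2k+1)}{E_0}L_{(2k+1)a}$, and $G_{,a}=-2E_0X_{(0)a}-L_{(1)a}$, the term $L_{(1)a}$ being present only if $\ell>0$. Integral 2. For $\ell\ge0$, $$I_{(\ell)2}=\sum_{k=0}^{\ell}\Big(-\frac{t^{2k+1}}{2k+1}L_{(2k)(a;b)}\dot q^a\dot q^b+t^{2k}L_{(2k)a}\dot q^a\Big),$$ where $L_{(2\ell)(a;b)}$ is a Killing tensor and, for $k=0,\dots,\ell-1$, $L_{(2k)(a;b)}$ is a second order CKT with associated vector $Y_{(2k)a}=\frac{(k+1)(2k+1)}{E_0}L_{(2k+2)a}$. Integral 3. For a constant $\lambda\ne0$, $$I_{(e)}=e^{\lambda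 t}\big(-L_{(a;b)}\dot q^a\dot q^b+\lambda L_a\dot q^a\big),$$ where $L_{(a;b)}$ is a second order CKT with associated vector $Y_a=\frac{\lambda^2}{2E_0}L_a$.
   Context: $\Gamma^a_{bc}$ are the Levi-Civita connection coefficients of $\gamma_{ab}$; comma = partial derivative, semicolon = covariant derivative, dot = $d/dt$; round brackets denote symmetrization with weight $1/N!$. A first integral of the constrained system is a function $I(t,q,\dot q)$ with $dI/dt=0$ along every geodesic with $\gamma_{ab}\dot q^a\dot q^b=2E_0$. A symmetric tensor $U_{ab}$ is a second order conformal Killing tensor (CKT) with associated vector $u_a$ if $U_{(ab;c)}=u_{(a}\gamma_{bc)}$; it is a Killing tensor if $u_a=0$. *)

theory Defs
  imports "HOL-Analysis.Analysis"
begin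

definition partial :: "(real^'n \<Rightarrow> real) \<Rightarrow> 'n \<Rightarrow> real^'n \<Rightarrow> real" where
  "partial f c q = deriv (\<lambda>s. f (q + s *\<^sub>R axis c 1)) 0"

fun iter_partial :: "'n list \<Rightarrow> (real^'n \<Rightarrow> real) \<Rightarrow> real^'n \<Rightarrow> real" where
  "iter_partial [] f = f"
| "iter_partial (c # cs) f = partial (iter_partial cs f) c"

definition smooth_fun :: "(real^'n) set \<Rightarrow> (real^'n \<Rightarrow> real) \<Rightarrow> bool" where
  "smooth_fun U f \<longleftrightarrow> (\<forall>cs. \<forall>q\<in>U. iter_partial cs f differentiable (at q))"

definition metric_on :: "(real^'n) set \<Rightarrow> (real^'n \<Rightarrow> 'n \<Rightarrow> 'n \<Rightarrow> real) \<Rightarrow> bool" where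
  "metric_on U g \<longleftrightarrow> open U \<and> (\<forall>a b. smooth_fun U (\<lambda>q. g q a b)) \<and>
     (\<forall>q\<in>U. \<forall>a b. g q a b = g q b a) \<and>
     (\<forall>q\<in>U. invertible (\<chi> a b. g q a b))"

definition inv_metric :: "(real^'n \<Rightarrow> 'n \<Rightarrow> 'n \<Rightarrow> real) \<Rightarrow> real^'n \<Rightarrow> 'n \<Rightarrow> 'n \<Rightarrow> real" where
  "inv_metric g q a b = matrix_inv (\<chi> i j. g q i j) $ a $ b"

definition christoffel :: "(real^'n \<Rightarrow> 'n \<Rightarrow> 'n \<Rightarrow> real) \<Rightarrow> real^'n \<Rightarrow> 'n \<Rightarrow> 'n \<Rightarrow> 'n \<Rightarrow> real" where
  "christoffel g q a b c = (\<Sum>d\<in>UNIV. inv_metric g q a d *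
     (partial (\<lambda>x. g x d b) c q + partial (\<lambda>x. g x d c) b q - partial (\<lambda>x. g x b c) d q) / 2)"

definition cov1 :: "(real^'n \<Rightarrow> 'n \<Rightarrow> 'n \<Rightarrow> real) \<Rightarrow> (real^'n \<Rightarrow> 'n \<Rightarrow> real) \<Rightarrow> real^'n \<Rightarrow> 'n \<Rightarrow> 'n \<Rightarrow> real" where
  "cov1 g L q a b = partial (\<lambda>x. L x a) b q - (\<Sum>c\<in>UNIV. christoffel g q c a b * L q c)"

definition symcov :: "(real^'n \<Rightarrow> 'n \<Rightarrow> 'n \<Rightarrow> real) \<Rightarrow> (real^'n \<Rightarrow> 'n \<Rightarrow> real) \<Rightarrow> real^'n \<Rightarrow> 'n \<Rightarrow> 'n \<Rightarrow> real" where
  "symcov g L q a b = (cov1 g L q a b + cov1 g L q b a) / 2"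

definition cov2 :: "(real^'n \<Rightarrow> 'n \<Rightarrow> 'n \<Rightarrow> real) \<Rightarrow> (real^'n \<Rightarrow> 'n \<Rightarrow> 'n \<Rightarrow> real) \<Rightarrow> real^'n \<Rightarrow> 'n \<Rightarrow> 'n \<Rightarrow> 'n \<Rightarrow> real" where
  "cov2 g T q a b c = partial (\<lambda>x. T x a b) c q
     - (\<Sum>d\<in>UNIV. christoffel g q d c a * T q d b)
     - (\<Sum>d\<in>UNIV. christoffel g q d c b * T q a d)"

definition is_CKT :: "(real^'n) set \<Rightarrow> (real^'n \<Rightarrow> 'n \<Rightarrow> 'n \<Rightarrow> real) \<Rightarrow> (real^'n \<Rightarrow> 'n \<Rightarrow> 'n \<Rightarrow> real)
     \<Rightarrow> (real^'n \<Rightarrow> 'n \<Rightarrow> real) \<Rightarrow> bool" where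
  "is_CKT U g T u \<longleftrightarrow> (\<forall>q\<in>U. \<forall>a b. T q a b = T q b a) \<and>
     (\<forall>q\<in>U. \<forall>a b c.
        (cov2 g T q a b c + cov2 g T q b c a + cov2 g T q c a b
         + cov2 g T q b a c + cov2 g T q a c b + cov2 g T q c b a) / 6
      = (u q a * g q b c + u q b * g q c a + u q c * g q a b
         + u q b * g q a c + u q a * g q c b + u q c * g q b a) / 6)"

definition is_KT :: "(real^'n) set \<Rightarrow> (real^'n \<Rightarrow> 'n \<Rightarrow> 'n \<Rightarrow> real) \<Rightarrow> (real^'n \<Rightarrow> 'n \<Rightarrow> 'n \<Rightarrow> real) \<Rightarrow> bool" where
  "is_KT U g T \<longleftrightarrow> is_CKT U g T (\<lambda>q a. 0)"

definition constrained_geodesic :: "(real^'n) set \<Rightarrow> (real^'n \<Rightarrow> 'n \<Rightarrow> 'n \<Rightarrow> real) \<Rightarrow> real \<Rightarrow> real set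
     \<Rightarrow> (real \<Rightarrow> real^'n) \<Rightarrow> (real \<Rightarrow> real^'n) \<Rightarrow> (real \<Rightarrow> real^'n) \<Rightarrow> bool" where
  "constrained_geodesic U g E0 T q qd qdd \<longleftrightarrow>
     (\<forall>t\<in>T. q t \<in> U \<and> (q has_vector_derivative qd t) (at t) \<and>
        (qd has_vector_derivative qdd t) (at t) \<and>
        (\<forall>a. qdd t $ a + (\<Sum>b\<in>UNIV. \<Sum>c\<in>UNIV. christoffel g (q t) a b c * qd t $ b * qd t $ c) = 0) \<and>
        (\<Sum>a\<in>UNIV. \<Sum>b\<in>UNIV. g (q t) a b * qd t $ a * qd t $ b) = 2 * E0)"

definition first_integral :: "(real^'n) set \<Rightarrow> (real^'n \<Rightarrow> 'n \<Rightarrow> 'n \<Rightarrow> real) \<Rightarrow> real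
     \<Rightarrow> (real \<Rightarrow> real^'n \<Rightarrow> real^'n \<Rightarrow> real) \<Rightarrow> bool" where
  "first_integral U g E0 I \<longleftrightarrow>
     (\<forall>T q qd qdd. open T \<and> is_interval T \<and> constrained_geodesic U g E0 T q qd qdd \<longrightarrow>
        (\<forall>t\<in>T. ((\<lambda>s. I s (q s) (qd s)) has_real_derivative 0) (at t)))"

end

theory Submission
  imports Defs
begin

text \<open>
  Along a constrained geodesic with velocity v the geodesic equation gives
  d/dt (L_a v^a) = L_(a;b) v^a v^b and d/dt (K_ab v^a v^b) = K_(ab;c) v^a v^b v^c. If K is a
  conformal Killing tensor with vector u, the latter is (u_a v^a) \<gamma>(v, v) = 2 E0 u_a v^a. So
  P_j = L_(j)a v^a and Q_j = L_(j)(a;b) v^a v^b satisfy P_j' = Q_j and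
  Q_j' = (j + 1)(j + 2) P_(j+2), ending with Q' = 0 at the Killing tensor (respectively
  Q' = \<lambda>^2 P for the exponential integral), and the three integrals are exactly the polynomial and
  exponential combinations of the P_j and Q_j whose time derivatives telescope to zero.
\<close>

abbreviation lin_form :: "('n::finite \<Rightarrow> real) \<Rightarrow> real^'n \<Rightarrow> real" where
  "lin_form L v \<equiv> \<Sum>a\<in>UNIV. L a * v $ a"

abbreviation quad_form :: "('n::finite \<Rightarrow> 'n \<Rightarrow> real) \<Rightarrow> real^'n \<Rightarrow> real" where
  "quad_form T v \<equiv> \<Sum>a\<in>UNIV. \<Sum>b\<in>UNIV. T a b * v $ a * v $ b"

section \<open>Partial derivatives and the chain rule\<close>

lemma partial_eq_has_derivative:
  assumes "(f has_derivative f') (at q)"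
  shows "partial f c q = f' (axis c 1)"
proof -
  have lin: "linear f'" using assms has_derivative_linear by blast
  have "((\<lambda>s. q + s *\<^sub>R axis c 1) has_derivative (\<lambda>s. s *\<^sub>R axis c 1)) (at 0)"
    by (auto intro!: derivative_eq_intros)
  moreover have "(f has_derivative f') (at (q + 0 *\<^sub>R axis c (1::real)))" using assms by simp
  ultimately have "((\<lambda>s. f (q + s *\<^sub>R axis c 1)) has_derivative (\<lambda>s. f' (s *\<^sub>R axis c 1))) (at 0)"
    using has_derivative_compose by (fastforce simp: o_def)
  moreover have "(\<lambda>s. f' (s *\<^sub>R axis c 1)) = (\<lambda>s. f' (axis c 1) * s)"
    using lin by (auto simp: linear_scale mult.commute)
  ultimately have "((\<lambda>s. f (q + s *\<^sub>R axis c 1)) has_real_derivative f' (axis c 1)) (at 0)"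
    by (simp add: has_field_derivative_def)
  then show ?thesis unfolding partial_def by (rule DERIV_imp_deriv)
qed

lemma linear_eq_sum_axis:
  fixes f :: "real^'n \<Rightarrow> real"
  assumes "linear f"
  shows "f v = (\<Sum>c\<in>UNIV. f (axis c 1) * v $ c)"
proof -
  have "f v = f (\<Sum>c\<in>UNIV. (v $ c) *\<^sub>R axis c 1)"
    using basis_expansion[of v] by (simp add: scalar_mult_eq_scaleR)
  also have "\<dots> = (\<Sum>c\<in>UNIV. v $ c * f (axis c 1))"
    using assms by (simp add: linear_sum linear_scale)
  finally show ?thesis by (simp add: mult.commute)
qed

lemma has_real_derivative_comp_curve:
  fixes f :: "real^'n \<Rightarrow> real"
  assumes "f differentiable (at (q t))" and "(q has_vector_derivative v) (at t)"
  shows "((\<lambda>s. f (q s)) has_real_derivative (\<Sum>c\<in>UNIV. partial f c (q t) * v $ c)) (at t)"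
proof -
  obtain f' where f': "(f has_derivative f') (at (q t))"
    using assms(1) differentiable_def by blast
  have lin: "linear f'" using f' has_derivative_linear by blast
  have "(q has_derivative (\<lambda>h. h *\<^sub>R v)) (at t)"
    using assms(2) has_vector_derivative_def by blast
  from has_derivative_compose[OF this f']
  have "((\<lambda>s. f (q s)) has_derivative (\<lambda>h. f' (h *\<^sub>R v))) (at t)"
    by (simp add: o_def)
  moreover have "(\<lambda>h. f' (h *\<^sub>R v)) = (\<lambda>h. f' v * h)"
    using lin by (auto simp: linear_scale mult.commute)
  moreover have "f' v = (\<Sum>c\<in>UNIV. partial f c (q t) * v $ c)"
    by (subst linear_eq_sum_axis[OF lin]) (simp add: partial_eq_has_derivative[OF f'])
  ultimately show ?thesis unfolding has_field_derivative_def by (simp only:)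
qed

lemma vec_nth_has_real_derivative:
  assumes "(x has_vector_derivative w) (at t)"
  shows "((\<lambda>s. x s $ a) has_real_derivative w $ a) (at t)"
  using bounded_linear.has_vector_derivative[OF bounded_linear_vec_nth assms, of a]
  by (simp add: has_real_derivative_iff_has_vector_derivative)

section \<open>Differentiability of the Levi-Civita connection\<close>

lemma differentiable_prod:
  fixes f :: "'i \<Rightarrow> real^'n \<Rightarrow> real"
  shows "(\<And>i. i \<in> I \<Longrightarrow> f i differentiable (at x)) \<Longrightarrow> (\<lambda>x. \<Prod>i\<in>I. f i x) differentiable (at x)"
proof (induct I rule: infinite_finite_induct)
  case (insert i I) then show ?case by (simp add: differentiable_mult)
qed auto

lemma differentiable_det:
  fixes F :: "real^'n \<Rightarrow> 'm::finite \<Rightarrow> 'm \<Rightarrow> real"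
  assumes "\<And>i j. (\<lambda>x. F x i j) differentiable (at q)"
  shows "(\<lambda>x. det (\<chi> i j. F x i j)) differentiable (at q)"
  unfolding det_def
  by (intro differentiable_sum ballI differentiable_mult differentiable_const differentiable_prod)
    (simp_all add: assms)

lemma matrix_inv_nth_cramer:
  fixes A :: "real^'n^'n"
  assumes "invertible A"
  shows "matrix_inv A $ a $ b = det (\<chi> i j. if j = a then axis b 1 $ i else A $ i $ j) / det A"
proof -
  let ?M = "matrix_inv A"
  let ?x = "\<chi> k. ?M $ k $ b"
  have "A ** ?M = mat 1"
    using assms unfolding invertible_def matrix_inv_def by (rule someI_ex[THEN conjunct1])
  moreover have "(A ** ?M) $ i $ b = (A *v ?x) $ i" for i
    by (simp add: matrix_matrix_mult_def matrix_vector_mult_def)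
  ultimately have "A *v ?x = axis b 1"
    by (auto simp: vec_eq_iff mat_def axis_def)
  moreover have "det A \<noteq> 0" using assms invertible_det_nz by blast
  ultimately have "?x = (\<chi> k. det (\<chi> i j. if j = k then axis b 1 $ i else A $ i $ j) / det A)"
    using cramer by blast
  then show ?thesis by (simp add: vec_eq_iff)
qed

lemma smooth_fun_differentiable: "smooth_fun U f \<Longrightarrow> q \<in> U \<Longrightarrow> f differentiable (at q)"
  unfolding smooth_fun_def using iter_partial.simps(1) by metis

lemma smooth_fun_partial_differentiable:
  "smooth_fun U f \<Longrightarrow> q \<in> U \<Longrightarrow> partial f c differentiable (at q)"
  unfolding smooth_fun_def using iter_partial.simps by metis

lemma inv_metric_differentiable:
  assumes metric: "metric_on U g" and q: "q \<in> U"
  shows "(\<lambda>x. inv_metric g x a b) differentiable (at q)"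
proof -
  let ?F = "\<lambda>x. det (\<chi> i j. if j = a then axis b 1 $ i else g x i j) / det (\<chi> i j. g x i j)"
  have g_diff: "\<And>i j. (\<lambda>x. g x i j) differentiable (at q)"
    using metric q smooth_fun_differentiable unfolding metric_on_def by blast
  have "det (\<chi> i j. g q i j) \<noteq> 0"
    using metric q invertible_det_nz unfolding metric_on_def by blast
  moreover have "(\<lambda>x. det (\<chi> i j. g x i j)) differentiable (at q)"
    by (rule differentiable_det) (rule g_diff)
  moreover have "(\<lambda>x. det (\<chi> i j. if j = a then axis b 1 $ i else g x i j)) differentiable (at q)"
  proof (rule differentiable_det)
    fix i j
    show "(\<lambda>x. if j = a then axis b 1 $ i else g x i j) differentiable (at q)"
      by (cases "j = a") (simp_all add: g_diff)
  qed
  ultimately have "?F differentiable (at q)" by (intro differentiable_divide)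
  then obtain F' where F': "(?F has_derivative F') (at q)" unfolding differentiable_def by blast
  have "?F x = inv_metric g x a b" if "x \<in> U" for x
    using that metric matrix_inv_nth_cramer[of "\<chi> i j. g x i j" a b]
    unfolding metric_on_def inv_metric_def by (simp cong: if_cong)
  with metric q have "((\<lambda>x. inv_metric g x a b) has_derivative F') (at q)"
    unfolding metric_on_def by (blast intro: has_derivative_transform_within_open[OF F'])
  then show ?thesis unfolding differentiable_def by blast
qed

lemma christoffel_differentiable:
  assumes metric: "metric_on U g" and q: "q \<in> U"
  shows "(\<lambda>x. christoffel g x a b c) differentiable (at q)"
proof -
  have "\<And>i j k. partial (\<lambda>x. g x i j) k differentiable (at q)"
    using metric q smooth_fun_partial_differentiable unfolding metric_on_def by blast
  then show ?thesis unfolding christoffel_def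
    by (intro differentiable_sum ballI differentiable_divide differentiable_mult differentiable_add
        differentiable_diff inv_metric_differentiable[OF metric q] differentiable_const) simp_all
qed

lemma cov1_differentiable:
  assumes metric: "metric_on U g" and q: "q \<in> U" and L: "\<forall>a. smooth_fun U (\<lambda>q. L q a)"
  shows "(\<lambda>x. cov1 g L x a b) differentiable (at q)"
proof -
  have "\<And>c. (\<lambda>x. L x c) differentiable (at q)" and "partial (\<lambda>x. L x a) b differentiable (at q)"
    using L q smooth_fun_differentiable smooth_fun_partial_differentiable by blast+
  then show ?thesis unfolding cov1_def
    by (intro differentiable_diff differentiable_sum ballI differentiable_mult
        christoffel_differentiable[OF metric q]) auto
qed

lemma symcov_differentiable:
  assumes metric: "metric_on U g" and q: "q \<in> U" and L: "\<forall>a. smooth_fun U (\<lambda>q. L q a)"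
  shows "(\<lambda>x. symcov g L x a b) differentiable (at q)"
  unfolding symcov_def
  by (intro differentiable_divide differentiable_add cov1_differentiable[OF metric q L]
      differentiable_const) simp

section \<open>Index gymnastics\<close>

lemma sum_swap_inner:
  "(\<Sum>a\<in>A. \<Sum>b\<in>B. \<Sum>c\<in>C. f a b c) = (\<Sum>a\<in>A. \<Sum>c\<in>C. \<Sum>b\<in>B. f a b c)"
  by (rule sum.cong[OF refl], rule sum.swap)

lemma sum_swap_inner2:
  "(\<Sum>a\<in>A. \<Sum>b\<in>B. \<Sum>c\<in>C. \<Sum>d\<in>D. f a b c d) = (\<Sum>a\<in>A. \<Sum>b\<in>B. \<Sum>d\<in>D. \<Sum>c\<in>C. f a b c d)"
  by (rule sum.cong[OF refl], rule sum_swap_inner)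

lemma contract_accel_linear:
  fixes L :: "'n::finite \<Rightarrow> real" and G :: "'n \<Rightarrow> 'n \<Rightarrow> 'n \<Rightarrow> real" and v w :: "'n \<Rightarrow> real"
  assumes "\<And>a. w a = - (\<Sum>b\<in>UNIV. \<Sum>c\<in>UNIV. G a b c * v b * v c)"
  shows "(\<Sum>a\<in>UNIV. L a * w a) = - (\<Sum>a\<in>UNIV. \<Sum>b\<in>UNIV. (\<Sum>c\<in>UNIV. G c a b * L c) * v a * v b)"
proof -
  have "(\<Sum>a\<in>UNIV. L a * w a) = - (\<Sum>c\<in>UNIV. \<Sum>a\<in>UNIV. \<Sum>b\<in>UNIV. G c a b * L c * v a * v b)"
    by (simp add: assms sum_distrib_left sum_negf mult_ac)
  also have "(\<Sum>c\<in>UNIV. \<Sum>a\<in>UNIV. \<Sum>b\<in>UNIV. G c a b * L c * v a * v b)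
      = (\<Sum>a\<in>UNIV. \<Sum>b\<in>UNIV. \<Sum>c\<in>UNIV. G c a b * L c * v a * v b)"
    by (subst sum.swap) (rule sum_swap_inner)
  also have "\<dots> = (\<Sum>a\<in>UNIV. \<Sum>b\<in>UNIV. (\<Sum>c\<in>UNIV. G c a b * L c) * v a * v b)"
    by (simp add: sum_distrib_right)
  finally show ?thesis .
qed

lemma contract_accel_quadratic_left:
  fixes T :: "'n::finite \<Rightarrow> 'n \<Rightarrow> real" and G :: "'n \<Rightarrow> 'n \<Rightarrow> 'n \<Rightarrow> real" and v w :: "'n \<Rightarrow> real"
  assumes "\<And>a. w a = - (\<Sum>b\<in>UNIV. \<Sum>c\<in>UNIV. G a b c * v b * v c)"
  shows "(\<Sum>a\<in>UNIV. \<Sum>b\<in>UNIV. T a b * w a * v b)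
     = - (\<Sum>a\<in>UNIV. \<Sum>b\<in>UNIV. \<Sum>c\<in>UNIV. (\<Sum>d\<in>UNIV. G d c a * T d b) * v a * v b * v c)"
proof -
  let ?H = "\<lambda>a b x c. G a x c * T a b * v x * v c * v b"
  have "(\<Sum>a\<in>UNIV. \<Sum>b\<in>UNIV. T a b * w a * v b)
      = - (\<Sum>a\<in>UNIV. \<Sum>b\<in>UNIV. \<Sum>x\<in>UNIV. \<Sum>c\<in>UNIV. ?H a b x c)"
    by (simp add: assms sum_distrib_left sum_distrib_right sum_negf mult_ac)
  also have "(\<Sum>a\<in>UNIV. \<Sum>b\<in>UNIV. \<Sum>x\<in>UNIV. \<Sum>c\<in>UNIV. ?H a b x c)
      = (\<Sum>a\<in>UNIV. \<Sum>c\<in>UNIV. \<Sum>b\<in>UNIV. \<Sum>x\<in>UNIV. ?H a b x c)"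
    by (subst sum_swap_inner2) (rule sum_swap_inner)
  also have "\<dots> = (\<Sum>c\<in>UNIV. \<Sum>b\<in>UNIV. \<Sum>x\<in>UNIV. \<Sum>a\<in>UNIV. ?H a b x c)"
    by (subst sum.swap) (subst sum_swap_inner, rule sum_swap_inner2)
  also have "\<dots> = (\<Sum>a\<in>UNIV. \<Sum>b\<in>UNIV. \<Sum>c\<in>UNIV. (\<Sum>d\<in>UNIV. G d c a * T d b) * v a * v b * v c)"
    by (simp add: sum_distrib_left sum_distrib_right mult_ac)
  finally show ?thesis .
qed

lemma contract_accel_quadratic_right:
  fixes T :: "'n::finite \<Rightarrow> 'n \<Rightarrow> real" and G :: "'n \<Rightarrow> 'n \<Rightarrow> 'n \<Rightarrow> real" and v w :: "'n \<Rightarrow> real"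
  assumes "\<And>a. w a = - (\<Sum>b\<in>UNIV. \<Sum>c\<in>UNIV. G a b c * v b * v c)"
  shows "(\<Sum>a\<in>UNIV. \<Sum>b\<in>UNIV. T a b * v a * w b)
     = - (\<Sum>a\<in>UNIV. \<Sum>b\<in>UNIV. \<Sum>c\<in>UNIV. (\<Sum>d\<in>UNIV. G d c b * T a d) * v a * v b * v c)"
proof -
  have "(\<Sum>a\<in>UNIV. \<Sum>b\<in>UNIV. T a b * v a * w b) = (\<Sum>b\<in>UNIV. \<Sum>a\<in>UNIV. T a b * w b * v a)"
    by (subst sum.swap) (simp add: mult_ac)
  also have "\<dots> = - (\<Sum>a\<in>UNIV. \<Sum>b\<in>UNIV. \<Sum>c\<in>UNIV. (\<Sum>d\<in>UNIV. G d c a * T b d) * v a * v b * v c)"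
    using contract_accel_quadratic_left[of w G v "\<lambda>a b. T b a", OF assms] by simp
  also have "(\<Sum>a\<in>UNIV. \<Sum>b\<in>UNIV. \<Sum>c\<in>UNIV. (\<Sum>d\<in>UNIV. G d c a * T b d) * v a * v b * v c)
      = (\<Sum>a\<in>UNIV. \<Sum>b\<in>UNIV. \<Sum>c\<in>UNIV. (\<Sum>d\<in>UNIV. G d c b * T a d) * v a * v b * v c)"
    by (subst sum.swap) (simp add: mult_ac)
  finally show ?thesis .
qed

definition cubic_form :: "('n::finite \<Rightarrow> 'n \<Rightarrow> 'n \<Rightarrow> real) \<Rightarrow> ('n \<Rightarrow> real) \<Rightarrow> real" where
  "cubic_form f v = (\<Sum>a\<in>UNIV. \<Sum>b\<in>UNIV. \<Sum>c\<in>UNIV. f a b c * v a * v b * v c)"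

lemma cubic_form_swap12: "cubic_form (\<lambda>a b c. f b a c) v = cubic_form f v"
  unfolding cubic_form_def by (subst sum.swap) (simp add: mult_ac)

lemma cubic_form_swap23: "cubic_form (\<lambda>a b c. f a c b) v = cubic_form f v"
  unfolding cubic_form_def by (subst sum_swap_inner) (simp add: mult_ac)

lemma cubic_form_rotate: "cubic_form (\<lambda>a b c. f b c a) v = cubic_form f v"
  using cubic_form_swap12[of "\<lambda>x y z. f x z y" v] cubic_form_swap23[of f v] by simp

lemma cubic_form_rotate': "cubic_form (\<lambda>a b c. f c a b) v = cubic_form f v"
  using cubic_form_swap23[of "\<lambda>x y z. f y x z" v] cubic_form_swap12[of f v] by simp

lemma cubic_form_swap13: "cubic_form (\<lambda>a b c. f c b a) v = cubic_form f v"
  using cubic_form_swap12[of "\<lambda>x y z. f z x y" v] cubic_form_rotate'[of f v] by simp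

lemma cubic_form_add: "cubic_form (\<lambda>a b c. f a b c + h a b c) v = cubic_form f v + cubic_form h v"
  unfolding cubic_form_def by (simp add: distrib_right sum.distrib)

lemma cubic_form_diff: "cubic_form (\<lambda>a b c. f a b c - h a b c) v = cubic_form f v - cubic_form h v"
  unfolding cubic_form_def by (simp add: left_diff_distrib sum_subtractf)

lemma cubic_form_divide: "cubic_form (\<lambda>a b c. f a b c / r) v = cubic_form f v / r"
  unfolding cubic_form_def by (simp add: sum_divide_distrib)

text \<open>A cubic form only sees the totally symmetric part of its coefficients, so the conformal
  Killing equation determines it completely.\<close>

lemma cubic_form_conformal:
  fixes K :: "'n::finite \<Rightarrow> 'n \<Rightarrow> 'n \<Rightarrow> real" and h :: "'n \<Rightarrow> 'n \<Rightarrow> real"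
  assumes "\<forall>a b c. (K a b c + K b c a + K c a b + K b a c + K a c b + K c b a) / 6
      = (u a * h b c + u b * h c a + u c * h a b + u b * h a c + u a * h c b + u c * h b a) / 6"
  shows "cubic_form K v = (\<Sum>a\<in>UNIV. u a * v a) * (\<Sum>a\<in>UNIV. \<Sum>b\<in>UNIV. h a b * v a * v b)"
proof -
  let ?P = "\<lambda>a b c. u a * h b c"
  have "cubic_form (\<lambda>a b c. (K a b c + K b c a + K c a b + K b a c + K a c b + K c b a) / 6) v
      = cubic_form (\<lambda>a b c. (?P a b c + ?P b c a + ?P c a b + ?P b a c + ?P a c b + ?P c b a) / 6) v"
    by (simp only: assms)
  then have "cubic_form K v = cubic_form ?P v"
    by (simp only: cubic_form_divide cubic_form_add
        cubic_form_rotate[of K v] cubic_form_rotate'[of K v] cubic_form_swap12[of K v]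
        cubic_form_swap23[of K v] cubic_form_swap13[of K v]
        cubic_form_rotate[of ?P v] cubic_form_rotate'[of ?P v] cubic_form_swap12[of ?P v]
        cubic_form_swap23[of ?P v] cubic_form_swap13[of ?P v]) simp
  also have "\<dots> = (\<Sum>a\<in>UNIV. u a * v a * (\<Sum>b\<in>UNIV. \<Sum>c\<in>UNIV. h b c * v b * v c))"
    unfolding cubic_form_def sum_distrib_left by (intro sum.cong refl) (simp only: mult_ac)
  finally show ?thesis by (simp add: sum_distrib_right)
qed

lemma quadratic_derivative_eq_cubic_form:
  fixes T :: "'n::finite \<Rightarrow> 'n \<Rightarrow> real" and dT G :: "'n \<Rightarrow> 'n \<Rightarrow> 'n \<Rightarrow> real" and v w :: "'n \<Rightarrow> real"
  assumes w: "\<And>a. w a = - (\<Sum>b\<in>UNIV. \<Sum>c\<in>UNIV. G a b c * v b * v c)"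
  shows "(\<Sum>a\<in>UNIV. \<Sum>b\<in>UNIV. T a b * v a * w b + (T a b * w a + (\<Sum>c\<in>UNIV. dT a b c * v c) * v a) * v b)
     = cubic_form (\<lambda>a b c. dT a b c - (\<Sum>d\<in>UNIV. G d c a * T d b) - (\<Sum>d\<in>UNIV. G d c b * T a d)) v"
proof -
  have "(\<Sum>a\<in>UNIV. \<Sum>b\<in>UNIV. T a b * v a * w b + (T a b * w a + (\<Sum>c\<in>UNIV. dT a b c * v c) * v a) * v b)
     = (\<Sum>a\<in>UNIV. \<Sum>b\<in>UNIV. T a b * v a * w b) + (\<Sum>a\<in>UNIV. \<Sum>b\<in>UNIV. T a b * w a * v b)
       + (\<Sum>a\<in>UNIV. \<Sum>b\<in>UNIV. (\<Sum>c\<in>UNIV. dT a b c * v c) * v a * v b)"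
    by (simp only: sum.distrib[symmetric] distrib_right) (simp only: add.assoc)
  also have "(\<Sum>a\<in>UNIV. \<Sum>b\<in>UNIV. (\<Sum>c\<in>UNIV. dT a b c * v c) * v a * v b) = cubic_form dT v"
    unfolding cubic_form_def sum_distrib_right by (intro sum.cong refl) (simp only: mult_ac)
  finally show ?thesis
    unfolding cubic_form_diff contract_accel_quadratic_left[OF w] contract_accel_quadratic_right[OF w]
    by (simp add: cubic_form_def)
qed

lemma linear_derivative_eq_quadratic:
  fixes L :: "'n::finite \<Rightarrow> real" and dL :: "'n \<Rightarrow> 'n \<Rightarrow> real" and G :: "'n \<Rightarrow> 'n \<Rightarrow> 'n \<Rightarrow> real"
    and v w :: "'n \<Rightarrow> real"
  assumes w: "\<And>a. w a = - (\<Sum>b\<in>UNIV. \<Sum>c\<in>UNIV. G a b c * v b * v c)"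
  shows "(\<Sum>a\<in>UNIV. L a * w a + (\<Sum>c\<in>UNIV. dL a c * v c) * v a)
     = (\<Sum>a\<in>UNIV. \<Sum>b\<in>UNIV. (dL a b - (\<Sum>c\<in>UNIV. G c a b * L c)) * v a * v b)"
proof -
  have "(\<Sum>a\<in>UNIV. L a * w a + (\<Sum>c\<in>UNIV. dL a c * v c) * v a)
     = (\<Sum>a\<in>UNIV. L a * w a) + (\<Sum>a\<in>UNIV. \<Sum>b\<in>UNIV. dL a b * v a * v b)"
    unfolding sum.distrib sum_distrib_right by (simp only: mult_ac)
  then show ?thesis
    unfolding contract_accel_linear[OF w] left_diff_distrib sum_subtractf by simp
qed

lemma quad_form_linear_combination:
  "quad_form (\<lambda>a b. - (\<Sum>k\<in>K. c k * S k a b) + C a b) v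
     = - (\<Sum>k\<in>K. c k * quad_form (S k) v) + quad_form C v"
proof -
  have "quad_form (\<lambda>a b. - (\<Sum>k\<in>K. c k * S k a b) + C a b) v
     = - (\<Sum>a\<in>UNIV. \<Sum>b\<in>UNIV. \<Sum>k\<in>K. c k * S k a b * v $ a * v $ b) + quad_form C v"
    by (simp only: distrib_right mult_minus_left sum_distrib_right sum.distrib sum_negf)
  also have "(\<Sum>a\<in>UNIV. \<Sum>b\<in>UNIV. \<Sum>k\<in>K. c k * S k a b * v $ a * v $ b)
      = (\<Sum>k\<in>K. \<Sum>a\<in>UNIV. \<Sum>b\<in>UNIV. c k * S k a b * v $ a * v $ b)"
    by (subst sum_swap_inner) (rule sum.swap)
  finally show ?thesis by (simp only: sum_distrib_left mult.assoc)
qed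

lemma quad_form_symcov_eq_cov1:
  "quad_form (symcov g L q) v = quad_form (cov1 g L q) v"
proof -
  have swap: "quad_form (\<lambda>a b. cov1 g L q b a) v = quad_form (cov1 g L q) v"
    by (subst sum.swap) (simp add: mult_ac)
  have "quad_form (symcov g L q) v = (quad_form (cov1 g L q) v + quad_form (\<lambda>a b. cov1 g L q b a) v) / 2"
    unfolding symcov_def by (simp add: sum_divide_distrib sum.distrib add_divide_distrib distrib_right)
  then show ?thesis unfolding swap by simp
qed

section \<open>Derivatives along constrained geodesics\<close>

lemma quad_form_has_derivative_geodesic:
  fixes T :: "real^'n \<Rightarrow> 'n \<Rightarrow> 'n \<Rightarrow> real"
  assumes q: "(q has_vector_derivative qd t) (at t)" and qd: "(qd has_vector_derivative qdd t) (at t)"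
    and geodesic: "\<forall>a. qdd t $ a + (\<Sum>b\<in>UNIV. \<Sum>c\<in>UNIV. christoffel g (q t) a b c * qd t $ b * qd t $ c) = 0"
    and T: "\<And>a b. (\<lambda>x. T x a b) differentiable (at (q t))"
  shows "((\<lambda>s. quad_form (T (q s)) (qd s)) has_real_derivative
           cubic_form (cov2 g T (q t)) (\<lambda>a. qd t $ a)) (at t)"
proof -
  have "((\<lambda>s. quad_form (T (q s)) (qd s)) has_real_derivative
     (\<Sum>a\<in>UNIV. \<Sum>b\<in>UNIV. T (q t) a b * qd t $ a * qdd t $ b + (T (q t) a b * qdd t $ a
        + (\<Sum>c\<in>UNIV. partial (\<lambda>x. T x a b) c (q t) * qd t $ c) * qd t $ a) * qd t $ b)) (at t)"
    using has_real_derivative_comp_curve[OF T q] vec_nth_has_real_derivative[OF qd]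
    by (intro DERIV_sum DERIV_mult')
  moreover have "qdd t $ a = - (\<Sum>b\<in>UNIV. \<Sum>c\<in>UNIV. christoffel g (q t) a b c * qd t $ b * qd t $ c)" for a
    using geodesic by (simp add: eq_neg_iff_add_eq_0)
  then have "cubic_form (cov2 g T (q t)) (\<lambda>a. qd t $ a)
      = (\<Sum>a\<in>UNIV. \<Sum>b\<in>UNIV. T (q t) a b * qd t $ a * qdd t $ b + (T (q t) a b * qdd t $ a
        + (\<Sum>c\<in>UNIV. partial (\<lambda>x. T x a b) c (q t) * qd t $ c) * qd t $ a) * qd t $ b)"
    unfolding cov2_def by (rule quadratic_derivative_eq_cubic_form[symmetric])
  ultimately show ?thesis by (simp only:)
qed

lemma lin_form_has_derivative_geodesic:
  fixes L :: "real^'n \<Rightarrow> 'n \<Rightarrow> real"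
  assumes q: "(q has_vector_derivative qd t) (at t)" and qd: "(qd has_vector_derivative qdd t) (at t)"
    and geodesic: "\<forall>a. qdd t $ a + (\<Sum>b\<in>UNIV. \<Sum>c\<in>UNIV. christoffel g (q t) a b c * qd t $ b * qd t $ c) = 0"
    and L: "\<And>a. (\<lambda>x. L x a) differentiable (at (q t))"
  shows "((\<lambda>s. lin_form (L (q s)) (qd s)) has_real_derivative quad_form (symcov g L (q t)) (qd t)) (at t)"
proof -
  have "((\<lambda>s. lin_form (L (q s)) (qd s)) has_real_derivative
     (\<Sum>a\<in>UNIV. L (q t) a * qdd t $ a + (\<Sum>c\<in>UNIV. partial (\<lambda>x. L x a) c (q t) * qd t $ c) * qd t $ a)) (at t)"
    using has_real_derivative_comp_curve[OF L q] vec_nth_has_real_derivative[OF qd]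
    by (intro DERIV_sum DERIV_mult')
  moreover have "qdd t $ a = - (\<Sum>b\<in>UNIV. \<Sum>c\<in>UNIV. christoffel g (q t) a b c * qd t $ b * qd t $ c)" for a
    using geodesic by (simp add: eq_neg_iff_add_eq_0)
  then have "quad_form (symcov g L (q t)) (qd t)
      = (\<Sum>a\<in>UNIV. L (q t) a * qdd t $ a + (\<Sum>c\<in>UNIV. partial (\<lambda>x. L x a) c (q t) * qd t $ c) * qd t $ a)"
    unfolding quad_form_symcov_eq_cov1 cov1_def by (rule linear_derivative_eq_quadratic[symmetric])
  ultimately show ?thesis by (simp only:)
qed

lemma constrained_geodesicD:
  assumes "constrained_geodesic U g E0 T q qd qdd" and "t \<in> T"
  shows "q t \<in> U" and "(q has_vector_derivative qd t) (at t)"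
    and "(qd has_vector_derivative qdd t) (at t)"
    and "\<forall>a. qdd t $ a + (\<Sum>b\<in>UNIV. \<Sum>c\<in>UNIV. christoffel g (q t) a b c * qd t $ b * qd t $ c) = 0"
    and "quad_form (g (q t)) (qd t) = 2 * E0"
  using assms unfolding constrained_geodesic_def by blast+

lemma constrained_geodesic_has_derivative_lin_form:
  assumes cg: "constrained_geodesic U g E0 T q qd qdd" and t: "t \<in> T"
    and L: "\<forall>a. smooth_fun U (\<lambda>q. L q a)"
  shows "((\<lambda>s. lin_form (L (q s)) (qd s)) has_real_derivative quad_form (symcov g L (q t)) (qd t)) (at t)"
  using constrained_geodesicD[OF cg t] L smooth_fun_differentiable
  by (blast intro: lin_form_has_derivative_geodesic)

lemma constrained_geodesic_has_derivative_CKT: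
  assumes cg: "constrained_geodesic U g E0 T q qd qdd" and t: "t \<in> T"
    and CKT: "is_CKT U g K u" and K: "\<And>x a b. x \<in> U \<Longrightarrow> (\<lambda>y. K y a b) differentiable (at x)"
  shows "((\<lambda>s. quad_form (K (q s)) (qd s)) has_real_derivative 2 * E0 * lin_form (u (q t)) (qd t)) (at t)"
proof -
  note at_t = constrained_geodesicD[OF cg t]
  have "cubic_form (cov2 g K (q t)) (\<lambda>a. qd t $ a) = lin_form (u (q t)) (qd t) * quad_form (g (q t)) (qd t)"
    using CKT at_t(1) unfolding is_CKT_def by (intro cubic_form_conformal) blast
  with at_t K[OF at_t(1)] quad_form_has_derivative_geodesic[of q qd t qdd g K] show ?thesis
    by (simp add: mult.commute)
qed

lemma constrained_geodesic_has_derivative_symcov_CKT: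
  assumes metric: "metric_on U g"
    and cg: "constrained_geodesic U g E0 T q qd qdd" and t: "t \<in> T"
    and L: "\<forall>a. smooth_fun U (\<lambda>q. L q a)" and CKT: "is_CKT U g (symcov g L) (\<lambda>q a. c * L' q a)"
  shows "((\<lambda>s. quad_form (symcov g L (q s)) (qd s)) has_real_derivative
           2 * E0 * c * lin_form (L' (q t)) (qd t)) (at t)"
  using constrained_geodesic_has_derivative_CKT[OF cg t CKT symcov_differentiable[OF metric _ L]]
  by (simp add: sum_distrib_left mult.assoc)

section \<open>The scalar first integrals\<close>

text \<open>The j-th summand has derivative h j - h (j + 2) with h j = j t^(j-1) P_j.\<close>

lemma has_real_derivative_telescoping_polynomial:
  fixes P Q :: "nat \<Rightarrow> real \<Rightarrow> real"
  assumes dP: "\<And>k. k < n \<Longrightarrow> (P (m + 2*k) has_real_derivative Q (m + 2*k) t) (at t)"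
    and dQ: "\<And>k. Suc k < n \<Longrightarrow> (Q (m + 2*k) has_real_derivative
               real ((m + 2*k + 1) * (m + 2*k + 2)) * P (m + 2*k + 2) t) (at t)"
    and dQ_last: "0 < n \<Longrightarrow> (Q (m + 2*(n - 1)) has_real_derivative 0) (at t)"
  shows "((\<lambda>s. \<Sum>k<n. s ^ (m + 2*k) * P (m + 2*k) s
                     - s ^ (m + 2*k + 1) / real (m + 2*k + 1) * Q (m + 2*k) s)
           has_real_derivative (if n = 0 then 0 else real m * t ^ (m - 1) * P m t)) (at t)"
proof -
  define h where "h k = (if k < n then real (m + 2*k) * t ^ (m + 2*k - 1) * P (m + 2*k) t else 0)" for k
  have "((\<lambda>s. s ^ (m + 2*k) * P (m + 2*k) s - s ^ (m + 2*k + 1) / real (m + 2*k + 1) * Q (m + 2*k) s)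
      has_real_derivative h k - h (Suc k)) (at t)" if k: "k < n" for k
  proof -
    define j where "j = m + 2*k"
    define D where "D = (if Suc k < n then real ((j + 1) * (j + 2)) * P (j + 2) t else 0)"
    have "(Q j has_real_derivative D) (at t)"
    proof (cases "Suc k < n")
      case False
      then have "k = n - 1" using k by simp
      then show ?thesis using dQ_last k False unfolding D_def j_def by simp
    qed (use dQ in \<open>simp add: D_def j_def\<close>)
    moreover have "((\<lambda>s. s ^ (j + 1) / real (j + 1)) has_real_derivative t ^ j) (at t)"
      using DERIV_cdivide[OF DERIV_pow[of "j + 1" t UNIV], of "real (j + 1)"]
      by (simp del: of_nat_add)
    moreover have "(P j has_real_derivative Q j t) (at t)"
      using dP k unfolding j_def by simp
    ultimately have "((\<lambda>s. s ^ j * P j s - s ^ (j + 1) / real (j + 1) * Q j s) has_real_derivative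
        (t ^ j * Q j t + real j * t ^ (j - 1) * P j t) - (t ^ (j + 1) / real (j + 1) * D + t ^ j * Q j t))
        (at t)"
      using DERIV_pow[of j t UNIV] by (intro DERIV_diff DERIV_mult') simp_all
    moreover have "t ^ (j + 1) / real (j + 1) * D = h (Suc k)"
      unfolding D_def h_def j_def by (simp add: field_simps)
    ultimately show ?thesis unfolding j_def h_def using k by simp
  qed
  then have "((\<lambda>s. \<Sum>k<n. s ^ (m + 2*k) * P (m + 2*k) s
                     - s ^ (m + 2*k + 1) / real (m + 2*k + 1) * Q (m + 2*k) s)
           has_real_derivative (\<Sum>k<n. h k - h (Suc k))) (at t)"
    by (intro DERIV_sum) simp
  also have "(\<Sum>k<n. h k - h (Suc k)) = (if n = 0 then 0 else real m * t ^ (m - 1) * P m t)"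
    unfolding sum_lessThan_telescope' by (simp add: h_def)
  finally show ?thesis .
qed

lemma first_integralI [case_names geodesic]:
  assumes "\<And>T q qd qdd t. constrained_geodesic U g E0 T q qd qdd \<Longrightarrow> t \<in> T \<Longrightarrow>
             ((\<lambda>s. I s (q s) (qd s)) has_real_derivative 0) (at t)"
  shows "first_integral U g E0 I"
  using assms unfolding first_integral_def by blast

lemma first_integral_even_polynomial:
  assumes metric: "metric_on U g" and E0: "E0 \<noteq> 0"
    and L_smooth: "\<forall>j\<le>2*l. \<forall>a. smooth_fun U (\<lambda>q. L j q a)"
    and KT: "is_KT U g (symcov g (L (2*l)))"
    and CKT: "\<forall>k<l. is_CKT U g (symcov g (L (2*k)))
          (\<lambda>q a. real ((k + 1) * (2*k + 1)) / E0 * L (2*k + 2) q a)"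
  shows "first_integral U g E0 (\<lambda>t q v.
          \<Sum>k=0..l. (- (t ^ (2*k + 1) / real (2*k + 1))
                       * (\<Sum>a\<in>UNIV. \<Sum>b\<in>UNIV. symcov g (L (2*k)) q a b * v $ a * v $ b)
                     + t ^ (2*k) * (\<Sum>a\<in>UNIV. L (2*k) q a * v $ a)))"
proof (induction rule: first_integralI)
  case (geodesic T q qd qdd t)
  define P where "P j s = lin_form (L j (q s)) (qd s)" for j s
  define Q where "Q j s = quad_form (symcov g (L j) (q s)) (qd s)" for j s
  have smooth: "\<forall>a. smooth_fun U (\<lambda>q. L (2*k) q a)" if "k \<le> l" for k
    using L_smooth that by simp
  have "((\<lambda>s. \<Sum>k<Suc l. s ^ (0 + 2*k) * P (0 + 2*k) s
                     - s ^ (0 + 2*k + 1) / real (0 + 2*k + 1) * Q (0 + 2*k) s)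
           has_real_derivative (if Suc l = 0 then 0 else real 0 * t ^ (0 - 1) * P 0 t)) (at t)"
  proof (rule has_real_derivative_telescoping_polynomial)
    fix k assume "k < Suc l"
    then show "(P (0 + 2*k) has_real_derivative Q (0 + 2*k) t) (at t)"
      unfolding P_def Q_def
      using constrained_geodesic_has_derivative_lin_form[OF geodesic smooth] by simp
  next
    fix k assume k: "Suc k < Suc l"
    then have "is_CKT U g (symcov g (L (2*k))) (\<lambda>q a. real ((k + 1) * (2*k + 1)) / E0 * L (2*k + 2) q a)"
      using CKT by simp
    from constrained_geodesic_has_derivative_symcov_CKT[OF metric geodesic smooth this]
    have "(Q (2*k) has_real_derivative 2 * E0 * (real ((k + 1) * (2*k + 1)) / E0) * P (2*k + 2) t) (at t)"
      using k unfolding P_def Q_def by simp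
    moreover have "2 * E0 * (real ((k + 1) * (2*k + 1)) / E0) = real ((0 + 2*k + 1) * (0 + 2*k + 2))"
      using E0 by (simp add: field_simps)
    ultimately show "(Q (0 + 2*k) has_real_derivative
        real ((0 + 2*k + 1) * (0 + 2*k + 2)) * P (0 + 2*k + 2) t) (at t)"
      by simp
  next
    have "is_CKT U g (symcov g (L (2*l))) (\<lambda>q a. 0 * L 0 q a)"
      using KT unfolding is_KT_def by simp
    from constrained_geodesic_has_derivative_symcov_CKT[OF metric geodesic smooth this]
    show "(Q (0 + 2*(Suc l - 1)) has_real_derivative 0) (at t)"
      unfolding Q_def by simp
  qed
  then show ?case
    unfolding P_def Q_def atLeast0AtMost lessThan_Suc_atMost by (simp add: algebra_simps)
qed

lemma first_integral_odd_polynomial: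
  assumes metric: "metric_on U g" and E0: "E0 \<noteq> 0"
    and L_smooth: "\<forall>j\<le>2*l. \<forall>a. smooth_fun U (\<lambda>q. L j q a)"
    and C0_smooth: "\<forall>a b. smooth_fun U (\<lambda>q. C0 q a b)" and G_smooth: "smooth_fun U G"
    and KT: "l \<ge> 1 \<longrightarrow> is_KT U g (symcov g (L (2*l - 1)))"
    and C0: "is_CKT U g C0 X0"
    and CKT: "\<forall>k\<in>{1..<l}. is_CKT U g (symcov g (L (2*k - 1)))
          (\<lambda>q a. real (k * (2*k + 1)) / E0 * L (2*k + 1) q a)"
    and G: "\<forall>q\<in>U. \<forall>a. partial G a q = - 2 * E0 * X0 q a - (if l > 0 then L 1 q a else 0)"
  shows "first_integral U g E0 (\<lambda>t q v.
          (\<Sum>a\<in>UNIV. \<Sum>b\<in>UNIV.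
             (- (\<Sum>k=1..l. t ^ (2*k) / real (2*k) * symcov g (L (2*k - 1)) q a b) + C0 q a b)
             * v $ a * v $ b)
          + (\<Sum>k=1..l. t ^ (2*k - 1) * (\<Sum>a\<in>UNIV. L (2*k - 1) q a * v $ a))
          + G q)"
proof (induction rule: first_integralI)
  case (geodesic T q qd qdd t)
  note at_t = constrained_geodesicD[OF geodesic]
  define P where "P j s = lin_form (L j (q s)) (qd s)" for j s
  define Q where "Q j s = quad_form (symcov g (L j) (q s)) (qd s)" for j s
  have smooth: "\<forall>a. smooth_fun U (\<lambda>q. L (1 + 2*k) q a)" if "k < l" for k
    using L_smooth that by simp
  have poly: "((\<lambda>s. \<Sum>k<l. s ^ (1 + 2*k) * P (1 + 2*k) s
                     - s ^ (1 + 2*k + 1) / real (1 + 2*k + 1) * Q (1 + 2*k) s)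
           has_real_derivative (if l = 0 then 0 else real 1 * t ^ (1 - 1) * P 1 t)) (at t)"
  proof (rule has_real_derivative_telescoping_polynomial)
    fix k assume "k < l"
    then show "(P (1 + 2*k) has_real_derivative Q (1 + 2*k) t) (at t)"
      unfolding P_def Q_def
      using constrained_geodesic_has_derivative_lin_form[OF geodesic smooth] by simp
  next
    fix k assume k: "Suc k < l"
    then have "is_CKT U g (symcov g (L (1 + 2*k)))
        (\<lambda>q a. real (Suc k * (2 * Suc k + 1)) / E0 * L (1 + 2*k + 2) q a)"
      using CKT[rule_format, of "Suc k"] by simp
    from constrained_geodesic_has_derivative_symcov_CKT[OF metric geodesic smooth this]
    have "(Q (1 + 2*k) has_real_derivative
        2 * E0 * (real (Suc k * (2 * Suc k + 1)) / E0) * P (1 + 2*k + 2) t) (at t)"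
      using k unfolding P_def Q_def by simp
    moreover have "2 * E0 * (real (Suc k * (2 * Suc k + 1)) / E0) = real ((1 + 2*k + 1) * (1 + 2*k + 2))"
      using E0 by (simp add: field_simps)
    ultimately show "(Q (1 + 2*k) has_real_derivative
        real ((1 + 2*k + 1) * (1 + 2*k + 2)) * P (1 + 2*k + 2) t) (at t)"
      by simp
  next
    assume l: "0 < l"
    then have "1 + 2*(l - 1) = 2*l - 1" by simp
    with l KT have "is_CKT U g (symcov g (L (1 + 2*(l - 1)))) (\<lambda>q a. 0 * L 0 q a)"
      unfolding is_KT_def by simp
    from constrained_geodesic_has_derivative_symcov_CKT[OF metric geodesic smooth this]
    show "(Q (1 + 2*(l - 1)) has_real_derivative 0) (at t)"
      using l unfolding Q_def by simp
  qed
  have C0': "((\<lambda>s. quad_form (C0 (q s)) (qd s)) has_real_derivative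
      2 * E0 * lin_form (X0 (q t)) (qd t)) (at t)"
    using C0_smooth smooth_fun_differentiable
    by (blast intro: constrained_geodesic_has_derivative_CKT[OF geodesic C0])
  have "(\<Sum>c\<in>UNIV. partial G c (q t) * qd t $ c)
      = - 2 * E0 * lin_form (X0 (q t)) (qd t) - (if l = 0 then 0 else P 1 t)"
    using G at_t(1) unfolding P_def
    by (simp add: left_diff_distrib sum_subtractf sum_distrib_left mult.assoc)
  with has_real_derivative_comp_curve[OF smooth_fun_differentiable[OF G_smooth at_t(1)] at_t(2)]
  have G': "((\<lambda>s. G (q s)) has_real_derivative
      - 2 * E0 * lin_form (X0 (q t)) (qd t) - (if l = 0 then 0 else P 1 t)) (at t)"
    by simp
  from DERIV_add[OF DERIV_add[OF poly C0'] G'] show ?case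
    unfolding quad_form_linear_combination P_def Q_def
    by (simp add: sum.atLeast1_atMost_eq sum_subtractf algebra_simps cong: if_cong)
qed

lemma first_integral_exponential:
  assumes metric: "metric_on U g" and E0: "E0 \<noteq> 0"
    and L_smooth: "\<forall>a. smooth_fun U (\<lambda>q. L q a)"
    and CKT: "is_CKT U g (symcov g L) (\<lambda>q a. lam\<^sup>2 / (2 * E0) * L q a)"
  shows "first_integral U g E0 (\<lambda>t q v.
          exp (lam * t) * (- (\<Sum>a\<in>UNIV. \<Sum>b\<in>UNIV. symcov g L q a b * v $ a * v $ b)
                          + lam * (\<Sum>a\<in>UNIV. L q a * v $ a)))"
proof (induction rule: first_integralI)
  case (geodesic T q qd qdd t)
  let ?P = "lin_form (L (q t)) (qd t)" and ?Q = "quad_form (symcov g L (q t)) (qd t)"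
  have "((\<lambda>s. quad_form (symcov g L (q s)) (qd s)) has_real_derivative lam\<^sup>2 * ?P) (at t)"
    using constrained_geodesic_has_derivative_symcov_CKT[OF metric geodesic L_smooth CKT] E0 by simp
  moreover have "((\<lambda>s. lin_form (L (q s)) (qd s)) has_real_derivative ?Q) (at t)"
    by (rule constrained_geodesic_has_derivative_lin_form[OF geodesic L_smooth])
  moreover have "((\<lambda>s. exp (lam * s)) has_real_derivative exp (lam * t) * lam) (at t)"
    by (auto intro!: derivative_eq_intros)
  ultimately have "((\<lambda>s. exp (lam * s) * (- quad_form (symcov g L (q s)) (qd s) + lam * lin_form (L (q s)) (qd s)))
      has_real_derivative exp (lam * t) * (- (lam\<^sup>2 * ?P) + lam * ?Q) + exp (lam * t) * lam * (- ?Q + lam * ?P))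
      (at t)"
    by (intro DERIV_mult' DERIV_add DERIV_minus DERIV_cmult)
  moreover have "exp (lam * t) * (- (lam\<^sup>2 * ?P) + lam * ?Q) + exp (lam * t) * lam * (- ?Q + lam * ?P) = 0"
    by (simp add: algebra_simps power2_eq_square)
  ultimately show ?case by simp
qed

theorem proposition2:
  fixes U :: "(real^'n) set" and g :: "real^'n \<Rightarrow> 'n \<Rightarrow> 'n \<Rightarrow> real" and E0 :: real
  assumes metric: "metric_on U g" and E0: "E0 \<noteq> 0"
  shows
   "(\<forall>(l::nat) (L::nat \<Rightarrow> real^'n \<Rightarrow> 'n \<Rightarrow> real) C0 X0 G.
      (\<forall>j\<le>2*l. \<forall>a. smooth_fun U (\<lambda>q. L j q a)) \<and>
      (\<forall>a b. smooth_fun U (\<lambda>q. C0 q a b)) \<and> (\<forall>a. smooth_fun U (\<lambda>q. X0 q a)) \<and> smooth_fun U G \<and>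
      (l \<ge> 1 \<longrightarrow> is_KT U g (symcov g (L (2*l - 1)))) \<and>
      is_CKT U g C0 X0 \<and>
      (\<forall>k\<in>{1..<l}. is_CKT U g (symcov g (L (2*k - 1)))
          (\<lambda>q a. real (k * (2*k + 1)) / E0 * L (2*k + 1) q a)) \<and>
      (\<forall>q\<in>U. \<forall>a. partial G a q = - 2 * E0 * X0 q a - (if l > 0 then L 1 q a else 0))
    \<longrightarrow> first_integral U g E0 (\<lambda>t q v.
          (\<Sum>a\<in>UNIV. \<Sum>b\<in>UNIV.
             (- (\<Sum>k=1..l. t ^ (2*k) / real (2*k) * symcov g (L (2*k - 1)) q a b) + C0 q a b)
             * v $ a * v $ b)
          + (\<Sum>k=1..l. t ^ (2*k - 1) * (\<Sum>a\<in>UNIV. L (2*k - 1) q a * v $ a))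
          + G q))
  \<and>
   (\<forall>(l::nat) (L::nat \<Rightarrow> real^'n \<Rightarrow> 'n \<Rightarrow> real).
      (\<forall>j\<le>2*l. \<forall>a. smooth_fun U (\<lambda>q. L j q a)) \<and>
      is_KT U g (symcov g (L (2*l))) \<and>
      (\<forall>k<l. is_CKT U g (symcov g (L (2*k)))
          (\<lambda>q a. real ((k + 1) * (2*k + 1)) / E0 * L (2*k + 2) q a))
    \<longrightarrow> first_integral U g E0 (\<lambda>t q v.
          \<Sum>k=0..l. (- (t ^ (2*k + 1) / real (2*k + 1))
                       * (\<Sum>a\<in>UNIV. \<Sum>b\<in>UNIV. symcov g (L (2*k)) q a b * v $ a * v $ b)
                     + t ^ (2*k) * (\<Sum>a\<in>UNIV. L (2*k) q a * v $ a))))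
  \<and>
   (\<forall>(lam::real) (L::real^'n \<Rightarrow> 'n \<Rightarrow> real).
      lam \<noteq> 0 \<and> (\<forall>a. smooth_fun U (\<lambda>q. L q a)) \<and>
      is_CKT U g (symcov g L) (\<lambda>q a. lam\<^sup>2 / (2 * E0) * L q a)
    \<longrightarrow> first_integral U g E0 (\<lambda>t q v.
          exp (lam * t) * (- (\<Sum>a\<in>UNIV. \<Sum>b\<in>UNIV. symcov g L q a b * v $ a * v $ b)
                          + lam * (\<Sum>a\<in>UNIV. L q a * v $ a))))"
  using first_integral_odd_polynomial[OF metric E0] first_integral_even_polynomial[OF metric E0]
    first_integral_exponential[OF metric E0]
  by blast

end
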